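(* Let $q$ be even and $\mu\in\mathbb F_q^*\setminus\{1\}$. Then $N_1(\mu)=\#\{\gamma\in\mathbb F_q^*:\mathrm{Tr}_2(\delta_{\mu,\gamma})=1\}$ and $\widetilde N_1(\mu)=\#\{c\in\mathbb F_q^*:\mathrm{Tr}_2(\widetilde\delta_{\mu,c})=1\}$, where $\delta_{\mu,\gamma}=\dfrac{\mu^3+\gamma^4}{\gamma^2(\mu+1)^2}+\dfrac1{\mu+1}$ and $\widetilde\delta_{\mu,c}=\dfrac{1+\mu c^4}{c^2(\mu+1)^2}+\dfrac{\mu}{\mu+1}$.
   Context: $\mathrm{Tr}_2$ denotes the absolute trace $\mathbb F_q\to\mathbb F_2$. $N_1(\mu)$ is the number of $\gamma\in\mathbb F_q$ such that $t^3+\gamma t^2+\mu t+\gamma=0$ has exactly one solution $t\in\mathbb F_q$; $\widetilde N_1(\mu)$ is the number of $c\in\mathbb F_q^*$ such that $t^3+ct^2+t+\mu c=0$ has exactly one solution $t\in\mathbb F_q$. *)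

theory Defs
  imports Main "HOL-Library.Cardinality"
begin

text \<open>For q = 2^m the absolute trace Tr_2 : F_q -> F_2 is
  x + x^2 + x^4 + ... + x^(2^(m-1)); its value lies in the prime field {0,1}
  of F_q, so we return it as an element of 'a.\<close>

definition abs_trace2 :: "'a::{finite,field} \<Rightarrow> 'a" where
  "abs_trace2 x = (\<Sum>i<(THE m. CARD('a) = 2 ^ m). x ^ (2 ^ i))"

definition N1 :: "'a::{finite,field} \<Rightarrow> nat" where
  "N1 \<mu> = card {\<gamma>::'a. card {t::'a. t^3 + \<gamma> * t^2 + \<mu> * t + \<gamma> = 0} = 1}"

definition N1_tilde :: "'a::{finite,field} \<Rightarrow> nat" where
  "N1_tilde \<mu> = card {c::'a. c \<noteq> 0 \<and> card {t::'a. t^3 + c * t^2 + t + \<mu> * c = 0} = 1}"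

end

theory Submission
  imports Defs "HOL-Computational_Algebra.Polynomial"
begin

text \<open>
  Evenness of q forces characteristic 2 (otherwise negation is a fixed-point-free involution
  of the nonzero elements), and then q = 2^m. In characteristic 2 the map z \<mapsto> z^2 + z is
  two-to-one onto the kernel of the trace, so z^2 + z = b is solvable iff Tr b = 0.

  Translating t = s + \<gamma> (resp. t = s + c) turns both cubics into s^3 + p s + r with r \<noteq> 0.
  If such a cubic has a root s0 it factors as (s + s0) times a quadratic, which by scaling
  has a root iff Tr (1 + p/s0^2) = 0, and Tr (p/s0^2) = Tr (p^3/r^2). If it has no root,
  Tr (p^3/r^2) = Tr 1 by counting: s \<mapsto> s^3 + p s is injective on the s whose value r
  satisfies Tr (p^3/r^2) \<noteq> Tr 1, and these s are exactly as many as such values r.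
  Hence the cubic has exactly one root iff Tr (p^3/r^2) \<noteq> Tr 1, and \<delta> differs from
  p^3/r^2 + 1 by an element w + w^2 of trace 0.
\<close>

lemma even_card_if_fixpoint_free_involution:
  assumes "finite A"
    and "\<And>x. x \<in> A \<Longrightarrow> f x \<in> A" "\<And>x. x \<in> A \<Longrightarrow> f x \<noteq> x" "\<And>x. x \<in> A \<Longrightarrow> f (f x) = x"
  shows "even (card A)"
  using assms
proof (induction "card A" arbitrary: A rule: less_induct)
  case less
  show ?case
  proof (cases "A = {}")
    case False
    then obtain x where x: "x \<in> A" by blast
    define B where "B = A - {x, f x}"
    have pair: "{x, f x} \<subseteq> A" "card {x, f x} = 2"
      using x less.prems(2,3)[OF x] by auto
    then have card_B: "card B = card A - 2" and "card A \<ge> 2"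
      using card_mono[OF less.prems(1) pair(1)] by (simp_all add: B_def card_Diff_subset)
    moreover have "f y \<in> B" if "y \<in> B" for y
    proof -
      from that have y: "y \<in> A" "y \<noteq> x" "y \<noteq> f x"
        by (auto simp: B_def)
      have "f y \<noteq> x" "f y \<noteq> f x"
        using y less.prems(4)[OF y(1)] less.prems(4)[OF x] by auto
      then show ?thesis
        using less.prems(2)[OF y(1)] by (simp add: B_def)
    qed
    then have "even (card B)"
      using less.prems \<open>card A \<ge> 2\<close> card_B by (intro less.hyps) (auto simp: B_def)
    ultimately show ?thesis by presburger
  qed simp
qed

lemma CHAR_eq_2_if_even_card:
  assumes "even CARD('a::{finite,field})"
  shows "CHAR('a) = 2"
proof -
  have "(2::'a) = 0"
  proof (rule ccontr)
    assume "(2::'a) \<noteq> 0"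
    have neg_ne: "- x \<noteq> x" if "x \<noteq> 0" for x :: 'a
    proof
      assume "- x = x"
      then have "x + x = x + - x"
        by (simp only:)
      then have "2 * x = 0"
        by (simp only: mult_2 add.right_inverse)
      with \<open>(2::'a) \<noteq> 0\<close> that show False
        by simp
    qed
    have "even (card (UNIV - {0::'a}))"
    proof (rule even_card_if_fixpoint_free_involution[where f = uminus])
      show "- x \<noteq> x" if "x \<in> UNIV - {0}" for x :: 'a
        using that neg_ne by blast
    qed auto
    moreover have "card (UNIV - {0::'a}) = CARD('a) - 1"
      by (simp add: card_Diff_singleton)
    moreover have "CARD('a) > 0"
      by (simp add: finite_UNIV_card_ge_0)
    ultimately show False
      using assms by presburger
  qed
  then have "CHAR('a) dvd 2"
    using of_nat_eq_0_iff_char_dvd[where ?'a='a, of 2] by simp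
  moreover from this have "CHAR('a) \<le> 2"
    by (rule dvd_imp_le) simp
  moreover have "CHAR('a) \<noteq> 0"
    using \<open>CHAR('a) dvd 2\<close> by (intro notI) simp
  ultimately show ?thesis
    using CHAR_not_1[where ?'a='a] by linarith
qed

lemma add_closed_Un_translate:
  fixes V :: "'a::ab_group_add set"
  assumes add_self: "\<And>y::'a. y + y = 0" and closed: "\<And>a b. a \<in> V \<Longrightarrow> b \<in> V \<Longrightarrow> a + b \<in> V"
    and "a \<in> V \<union> (+) x ` V" "b \<in> V \<union> (+) x ` V"
  shows "a + b \<in> V \<union> (+) x ` V"
proof -
  have add_self_left: "x + (x + y) = y" for y
    by (simp flip: add.assoc add: add_self)
  have mem: "y \<in> V \<union> (+) x ` V \<longleftrightarrow> y \<in> V \<or> x + y \<in> V" for y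
    by (metis UnCI UnE add_self_left image_eqI image_iff)
  have "(x + a) + (x + b) = a + b" "a + (x + b) = x + (a + b)" "(x + a) + b = x + (a + b)"
    by (simp_all add: add.left_commute add.assoc add_self_left)
  then show ?thesis
    using assms(3,4) closed unfolding mem by metis
qed

lemma card_Un_translate:
  fixes V :: "'a::ab_group_add set"
  assumes add_self: "\<And>y::'a. y + y = 0" and closed: "\<And>a b. a \<in> V \<Longrightarrow> b \<in> V \<Longrightarrow> a + b \<in> V"
    and "finite V" "x \<notin> V"
  shows "card (V \<union> (+) x ` V) = 2 * card V"
proof -
  have "x + v \<notin> V" if "v \<in> V" for v
  proof
    assume "x + v \<in> V"
    then have "(x + v) + v \<in> V" using that by (rule closed)
    then show False using \<open>x \<notin> V\<close> by (simp add: add.assoc add_self)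
  qed
  then have "V \<inter> (+) x ` V = {}"
    by auto
  then show ?thesis
    using \<open>finite V\<close> by (simp add: card_Un_disjoint card_image)
qed

lemma card_eq_power_of_two_if_add_self_eq_0:
  assumes add_self: "\<And>x::'a::{finite,ab_group_add}. x + x = 0"
  shows "\<exists>m. CARD('a) = 2 ^ m"
proof -
  have "\<exists>m. CARD('a) = 2 ^ m"
    if "0 \<in> V" "\<And>x y. x \<in> V \<Longrightarrow> y \<in> V \<Longrightarrow> x + y \<in> V" "card V = 2 ^ j" for V :: "'a set" and j
    using that
  proof (induction "CARD('a) - card V" arbitrary: V j rule: less_induct)
    case less
    show ?case
    proof (cases "V = UNIV")
      case True
      then show ?thesis using less.prems(3) by auto
    next
      case False
      then obtain x where "x \<notin> V" by blast
      define W where "W = V \<union> (+) x ` V"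
      have card_W: "card W = 2 ^ Suc j"
        using card_Un_translate[OF add_self less.prems(2) _ \<open>x \<notin> V\<close>] less.prems(3)
        by (simp add: W_def)
      have "card W \<le> CARD('a)"
        by (rule card_mono) auto
      moreover have "card V < card W"
        using less.prems(3) card_W by simp
      ultimately have "CARD('a) - card W < CARD('a) - card V"
        by (meson diff_less_mono2 order_less_le_trans)
      moreover have "0 \<in> W"
        using less.prems(1) by (simp add: W_def)
      moreover have "a + b \<in> W" if "a \<in> W" "b \<in> W" for a b
        using add_closed_Un_translate[OF add_self less.prems(2)] that by (simp add: W_def)
      ultimately show ?thesis
        using card_W by (intro less.hyps[of W "Suc j"]) auto
    qed
  qed
  from this[of "{0}" 0] show ?thesis
    by simp
qed

text \<open>The library's \<open>finite_field_power_card_eq_same\<close> needs the type class \<open>finite_field\<close>,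
  which the sort \<open>{finite,field}\<close> of the theorem does not provide.\<close>

lemma finite_field_power_card:
  fixes x :: "'a::{finite,field}"
  shows "x ^ CARD('a) = x"
proof (cases "x = 0")
  case False
  let ?U = "UNIV - {0::'a}"
  have "(\<Prod>y\<in>?U. x * y) = \<Prod>?U"
    by (rule prod.reindex_bij_witness[of _ "\<lambda>y. y / x" "\<lambda>y. x * y"]) (use False in auto)
  then have "x ^ card ?U * \<Prod>?U = \<Prod>?U"
    by (simp add: prod.distrib)
  then have "x ^ card ?U = 1"
    by simp
  moreover have "CARD('a) = Suc (card ?U)"
    using finite_UNIV_card_ge_0[where ?'a='a] by (simp add: card_Diff_singleton)
  ultimately show ?thesis
    by (simp only: power_Suc mult_1_right)
qed (use finite_UNIV_card_ge_0[where ?'a='a] in \<open>simp add: power_0_left\<close>)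

lemma card_Collect_shift:
  fixes c :: "'a::ab_group_add"
  shows "card {t. P t} = card {s. P (s + c)}"
proof -
  have "bij_betw (\<lambda>s. s + c) {s. P (s + c)} {t. P t}"
    by (rule bij_betw_byWitness[where f'="\<lambda>t. t - c"]) auto
  then show ?thesis by (simp add: bij_betw_same_card)
qed

context
  fixes m :: nat
  assumes CHAR_eq_2: "CHAR('a::{finite,field}) = 2"
    and card_eq: "CARD('a) = 2 ^ m"
begin

lemma minus_self [simp]: "- x = (x::'a)"
  using CHAR_eq_2 by (rule uminus_CHAR_2)

lemma add_self [simp]: "x + x = (0::'a)"
  using add.right_inverse[of x] by (simp only: minus_self)

lemma add_self_left [simp]: "x + (x + y) = (y::'a)"
  by (simp flip: add.assoc)

lemma eq_iff_add_eq_0: "x = y \<longleftrightarrow> x + y = (0::'a)"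
  by (simp add: add_eq_0_iff2)

lemma power_two_power_add: "(x + y) ^ 2 ^ i = x ^ 2 ^ i + (y::'a) ^ 2 ^ i"
  by (rule freshmans_dream') (simp_all add: CHAR_eq_2)

lemma square_add: "(x + y) ^ 2 = x ^ 2 + (y::'a) ^ 2"
  using power_two_power_add[of x y 1] by simp

lemma square_eq_iff [simp]: "x ^ 2 = y ^ 2 \<longleftrightarrow> x = (y::'a)"
  by (metis eq_iff_add_eq_0 square_add zero_eq_power2)

lemma power_card: "x ^ 2 ^ m = (x::'a)"
  using finite_field_power_card[of x] by (simp add: card_eq)

lemma m_pos: "m > 0"
proof -
  have "card {0::'a, 1} \<le> CARD('a)"
    by (rule card_mono) auto
  then show ?thesis
    using card_eq by (cases m) auto
qed

lemma exists_square_eq: "\<exists>y. y ^ 2 = (x::'a)"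
proof -
  have "inj (\<lambda>y::'a. y ^ 2)"
    by (simp add: inj_on_def)
  then have "surj (\<lambda>y::'a. y ^ 2)"
    by (simp add: finite_UNIV_inj_surj)
  then show ?thesis
    by (metis surjD)
qed

lemma abs_trace2_eq_sum: "abs_trace2 x = (\<Sum>i<m. (x::'a) ^ 2 ^ i)"
proof -
  have "(THE k. CARD('a) = 2 ^ k) = m"
    using card_eq by (intro the_equality) (simp_all add: power_inject_exp)
  then show ?thesis
    by (simp add: abs_trace2_def)
qed

lemma abs_trace2_add: "abs_trace2 (x + y) = abs_trace2 x + abs_trace2 (y::'a)"
  by (simp add: abs_trace2_eq_sum power_two_power_add sum.distrib)

lemma abs_trace2_square [simp]: "abs_trace2 (x ^ 2) = abs_trace2 (x::'a)"
proof -
  have "abs_trace2 (x ^ 2) + x = (\<Sum>i<m. x ^ 2 ^ Suc i) + x ^ 2 ^ 0"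
    by (simp add: abs_trace2_eq_sum flip: power_mult)
  also have "\<dots> = (\<Sum>i<Suc m. x ^ 2 ^ i)"
    by (simp only: sum.lessThan_Suc_shift add.commute)
  also have "\<dots> = abs_trace2 x + x"
    by (simp add: abs_trace2_eq_sum power_card)
  finally show ?thesis
    by simp
qed

lemma abs_trace2_eq_0_or_1: "abs_trace2 x = 0 \<or> abs_trace2 (x::'a) = 1"
proof -
  have "abs_trace2 x ^ 2 = abs_trace2 (x ^ 2)"
    by (simp add: abs_trace2_eq_sum freshmans_dream_sum[where n=2] CHAR_eq_2 mult.commute
        flip: power_mult)
  then have "abs_trace2 x ^ 2 = abs_trace2 x"
    by simp
  then show ?thesis
    by (simp add: power2_eq_square)
qed

lemma card_abs_trace2_eq_0_le: "card {x::'a. abs_trace2 x = 0} \<le> 2 ^ (m - 1)"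
proof -
  define P :: "'a poly" where "P = (\<Sum>i<m. monom 1 (2 ^ i))"
  have poly_P: "poly P x = abs_trace2 x" for x
    by (simp add: P_def abs_trace2_eq_sum poly_sum poly_monom)
  have "degree P \<le> 2 ^ (m - 1)"
    unfolding P_def by (intro degree_sum_le order.trans[OF degree_monom_le]) auto
  moreover have "coeff P (2 ^ (m - 1)) = 1"
    using m_pos by (simp add: P_def coeff_sum coeff_monom)
  then have "P \<noteq> 0"
    by auto
  ultimately show ?thesis
    using card_poly_roots_bound[of P] poly_P by simp
qed

lemma card_range_square_add: "2 * card (range (\<lambda>z::'a. z ^ 2 + z)) = CARD('a)"
proof -
  let ?L = "\<lambda>z::'a. z ^ 2 + z"
  have "?L y = ?L z \<longleftrightarrow> y = z \<or> y = z + 1" for y z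
  proof -
    have "?L y = ?L z \<longleftrightarrow> (y + z) * (y + z + 1) = 0"
      by (subst eq_iff_add_eq_0) (simp add: algebra_simps power2_eq_square)
    then show ?thesis
      by (simp add: eq_iff_add_eq_0[of y] add.assoc)
  qed
  then have fiber: "?L -` {?L z} = {z, z + 1}" for z
    unfolding set_eq_iff vimage_singleton_eq by simp
  have "(\<Union>y\<in>range ?L. ?L -` {y}) = UNIV"
    by auto
  then have "CARD('a) = card (\<Union>y\<in>range ?L. ?L -` {y})"
    by simp
  also have "\<dots> = (\<Sum>y\<in>range ?L. card (?L -` {y}))"
    by (rule card_UN_disjoint) auto
  also have "\<dots> = (\<Sum>y\<in>range ?L. 2)"
    by (rule sum.cong) (auto simp: fiber)
  finally show ?thesis
    by simp
qed

lemma abs_trace2_eq_0_iff: "abs_trace2 b = 0 \<longleftrightarrow> (\<exists>z. z ^ 2 + z = (b::'a))"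
proof -
  let ?R = "range (\<lambda>z::'a. z ^ 2 + z)" and ?K = "{x::'a. abs_trace2 x = 0}"
  have "?R \<subseteq> ?K"
    by (auto simp: abs_trace2_add)
  moreover have "card ?R = 2 ^ (m - 1)"
    using card_range_square_add card_eq m_pos by (cases m) auto
  moreover have "card ?R \<le> card ?K"
    using \<open>?R \<subseteq> ?K\<close> by (intro card_mono) simp_all
  ultimately have "?R = ?K"
    using card_abs_trace2_eq_0_le by (intro card_subset_eq) simp_all
  then have "abs_trace2 b = 0 \<longleftrightarrow> b \<in> ?R"
    by simp
  then show ?thesis
    by blast
qed

lemma quadratic_has_root_iff:
  assumes "a \<noteq> 0"
  shows "(\<exists>s. s ^ 2 + a * s + c = 0) \<longleftrightarrow> abs_trace2 (c / a ^ 2) = (0::'a)"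
proof -
  have scale: "(a * z) ^ 2 + a * (a * z) + c = a ^ 2 * (z ^ 2 + z + c / a ^ 2)" for z
    using assms by (simp add: field_simps power2_eq_square)
  have "(\<exists>s. s ^ 2 + a * s + c = 0) \<longleftrightarrow> (\<exists>z. (a * z) ^ 2 + a * (a * z) + c = 0)"
    using assms by (metis nonzero_mult_div_cancel_left times_divide_eq_right)
  also have "\<dots> \<longleftrightarrow> (\<exists>z. z ^ 2 + z = c / a ^ 2)"
    unfolding scale using assms by (simp add: eq_iff_add_eq_0[of _ "c / a ^ 2"] add.assoc)
  also have "\<dots> \<longleftrightarrow> abs_trace2 (c / a ^ 2) = 0"
    by (simp add: abs_trace2_eq_0_iff)
  finally show ?thesis .
qed

lemma abs_trace2_cubic_ratio:
  assumes "s \<noteq> 0" "s ^ 2 \<noteq> p"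
  shows "abs_trace2 (p ^ 3 / (s ^ 3 + p * s) ^ 2) = abs_trace2 (p / s ^ 2 :: 'a)"
proof -
  define t where "t = s ^ 2 + p"
  have "t \<noteq> 0"
    using assms(2) eq_iff_add_eq_0[of "s ^ 2" p] by (simp add: t_def)
  have "s ^ 3 + p * s = s * t"
    by (simp add: t_def algebra_simps power2_eq_square power3_eq_cube)
  moreover have "p ^ 3 = p * t ^ 2 + s ^ 2 * s ^ 2 * t + s ^ 2 * s ^ 2 * s ^ 2"
    unfolding t_def square_add by (simp add: algebra_simps power2_eq_square power3_eq_cube)
  then have "p ^ 3 / (s * t) ^ 2 = p / s ^ 2 + (s ^ 2 / t + (s ^ 2 / t) ^ 2)"
    using assms(1) \<open>t \<noteq> 0\<close> by (simp add: field_simps power2_eq_square)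
  ultimately show ?thesis
    by (simp add: abs_trace2_add)
qed

lemma card_roots_cubic_with_root:
  assumes root: "s0 ^ 3 + p * s0 = r" and "r \<noteq> 0"
  shows "card {s. s ^ 3 + p * s + r = 0} = 1 \<longleftrightarrow> abs_trace2 (p ^ 3 / r ^ 2) \<noteq> abs_trace2 (1::'a)"
proof -
  let ?Q = "\<lambda>s. s ^ 2 + s0 * s + (s0 ^ 2 + p)"
  have "s0 \<noteq> 0" "s0 ^ 2 \<noteq> p"
    using root \<open>r \<noteq> 0\<close> by (auto simp: power2_eq_square power3_eq_cube)
  have "s ^ 3 + p * s + r = (s + s0) * ?Q s" for s
    unfolding root[symmetric] by (simp add: algebra_simps power2_eq_square power3_eq_cube)
  then have roots: "{s. s ^ 3 + p * s + r = 0} = insert s0 {s. ?Q s = 0}"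
    by (auto simp: eq_iff_add_eq_0[of _ s0])
  have "?Q s0 = s0 ^ 2 + p"
    by (simp add: power2_eq_square)
  then have "?Q s0 \<noteq> 0"
    using \<open>s0 ^ 2 \<noteq> p\<close> eq_iff_add_eq_0[of "s0 ^ 2" p] by simp
  then have "card {s. s ^ 3 + p * s + r = 0} = 1 \<longleftrightarrow> \<not> (\<exists>s. ?Q s = 0)"
    unfolding roots by (auto simp: card_insert_if)
  also have "\<dots> \<longleftrightarrow> abs_trace2 ((s0 ^ 2 + p) / s0 ^ 2) \<noteq> 0"
    using quadratic_has_root_iff[OF \<open>s0 \<noteq> 0\<close>] by simp
  also have "(s0 ^ 2 + p) / s0 ^ 2 = 1 + p / s0 ^ 2"
    using \<open>s0 \<noteq> 0\<close> by (simp add: add_divide_distrib)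
  also have "abs_trace2 (1 + p / s0 ^ 2) = abs_trace2 1 + abs_trace2 (p ^ 3 / r ^ 2)"
    using abs_trace2_cubic_ratio[OF \<open>s0 \<noteq> 0\<close> \<open>s0 ^ 2 \<noteq> p\<close>] root by (simp add: abs_trace2_add)
  finally show ?thesis
    using eq_iff_add_eq_0[of "abs_trace2 (p ^ 3 / r ^ 2)" "abs_trace2 1"] by (simp add: add.commute)
qed

lemma card_nonzero_div_square:
  assumes "c \<noteq> 0"
  shows "card {x::'a. x \<noteq> 0 \<and> P (c / x ^ 2)} = card {y. y \<noteq> 0 \<and> P y}"
proof -
  let ?f = "\<lambda>x::'a. c / x ^ 2"
  have inj: "inj_on ?f (- {0})"
    using assms by (auto simp: inj_on_def)
  moreover have "?f ` (- {0}) \<subseteq> - {0}"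
    using assms by auto
  ultimately have "?f ` (- {0}) = - {0}"
    by (simp add: endo_inj_surj)
  then have "{y \<in> - {0}. P y} = ?f ` {x \<in> - {0}. P (?f x)}"
    by (metis Compr_image_eq)
  moreover have "card (?f ` {x \<in> - {0}. P (?f x)}) = card {x \<in> - {0}. P (?f x)}"
    using inj by (intro card_image inj_on_subset[OF inj]) auto
  ultimately show ?thesis
    by (simp add: conj_commute)
qed

lemma card_cubic_values_with_trace:
  "card {s::'a. s ^ 3 + p * s \<noteq> 0 \<and> abs_trace2 (p ^ 3 / (s ^ 3 + p * s) ^ 2) \<noteq> abs_trace2 1}
     = card {r. r \<noteq> 0 \<and> abs_trace2 (p ^ 3 / r ^ 2) \<noteq> abs_trace2 1}"
proof (cases "p = 0")
  case False
  have "s ^ 3 + p * s \<noteq> 0 \<and> abs_trace2 (p ^ 3 / (s ^ 3 + p * s) ^ 2) \<noteq> abs_trace2 1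
      \<longleftrightarrow> s \<noteq> 0 \<and> abs_trace2 (p / s ^ 2) \<noteq> abs_trace2 1" for s
  proof (cases "s \<noteq> 0 \<and> s ^ 2 \<noteq> p")
    case True
    have "s ^ 3 + p * s = s * (s ^ 2 + p)"
      by (simp add: algebra_simps power2_eq_square power3_eq_cube)
    moreover have "s ^ 2 + p \<noteq> 0"
      using True eq_iff_add_eq_0[of "s ^ 2" p] by simp
    ultimately show ?thesis
      using True abs_trace2_cubic_ratio[of s p] by simp
  next
    case False
    then have "s ^ 3 + p * s = 0"
      by (auto simp: power2_eq_square power3_eq_cube)
    with False show ?thesis
      using \<open>p \<noteq> 0\<close> by auto
  qed
  then have "card {s::'a. s ^ 3 + p * s \<noteq> 0 \<and> abs_trace2 (p ^ 3 / (s ^ 3 + p * s) ^ 2) \<noteq> abs_trace2 1}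
      = card {s. s \<noteq> 0 \<and> abs_trace2 (p / s ^ 2) \<noteq> abs_trace2 1}"
    by simp
  also have "\<dots> = card {y::'a. y \<noteq> 0 \<and> abs_trace2 y \<noteq> abs_trace2 1}"
    using card_nonzero_div_square[of p "\<lambda>y. abs_trace2 y \<noteq> abs_trace2 1"] False by simp
  also have "\<dots> = card {r. r \<noteq> 0 \<and> abs_trace2 (p ^ 3 / r ^ 2) \<noteq> abs_trace2 1}"
    using card_nonzero_div_square[of "p ^ 3" "\<lambda>y. abs_trace2 y \<noteq> abs_trace2 1"] False by simp
  finally show ?thesis .
qed (simp add: power_0_left)

lemma cubic_has_root_if_abs_trace2:
  assumes "r \<noteq> 0" "abs_trace2 (p ^ 3 / r ^ 2) \<noteq> abs_trace2 (1::'a)"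
  shows "\<exists>s. s ^ 3 + p * s = r"
proof -
  let ?\<phi> = "\<lambda>s::'a. s ^ 3 + p * s"
  define G where "G = {y. y \<noteq> 0 \<and> abs_trace2 (p ^ 3 / y ^ 2) \<noteq> abs_trace2 (1::'a)}"
  define S where "S = {s. ?\<phi> s \<in> G}"
  have "inj_on ?\<phi> S"
  proof (rule inj_onI)
    fix s s' assume "s \<in> S" "s' \<in> S" and eq: "?\<phi> s = ?\<phi> s'"
    then have "card {t. t ^ 3 + p * t + ?\<phi> s = 0} = 1"
      using card_roots_cubic_with_root[of s p "?\<phi> s"] by (simp add: S_def G_def)
    then obtain t where "{t. t ^ 3 + p * t + ?\<phi> s = 0} = {t}"
      by (rule card_1_singletonE)
    moreover have "s \<in> {t. t ^ 3 + p * t + ?\<phi> s = 0}" "s' \<in> {t. t ^ 3 + p * t + ?\<phi> s = 0}"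
      by (simp_all add: eq)
    ultimately show "s = s'"
      by (metis singletonD)
  qed
  moreover have "card S = card G"
    unfolding S_def G_def using card_cubic_values_with_trace[of p] by simp
  moreover have "?\<phi> ` S \<subseteq> G"
    by (auto simp: S_def)
  ultimately have "?\<phi> ` S = G"
    by (intro card_subset_eq) (simp_all add: card_image)
  moreover have "r \<in> G"
    using assms by (simp add: G_def)
  ultimately show ?thesis
    by auto
qed

theorem card_roots_cubic_eq_1_iff:
  assumes "r \<noteq> 0"
  shows "card {s. s ^ 3 + p * s + r = 0} = 1 \<longleftrightarrow> abs_trace2 (p ^ 3 / r ^ 2) \<noteq> abs_trace2 (1::'a)"
proof (cases "\<exists>s0. s0 ^ 3 + p * s0 = r")
  case True
  then show ?thesis
    using card_roots_cubic_with_root assms by blast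
next
  case False
  then have "{s. s ^ 3 + p * s + r = 0} = {}"
    by (auto simp: eq_iff_add_eq_0[of _ r])
  then show ?thesis
    using False cubic_has_root_if_abs_trace2[of r p] assms by auto
qed

lemma card_roots_cubic_eq_1_iff_abs_trace2_eq_1:
  assumes "r \<noteq> 0" and "d = p ^ 3 / r ^ 2 + 1 + (w + w ^ 2)"
  shows "card {s. s ^ 3 + p * s + r = 0} = 1 \<longleftrightarrow> abs_trace2 d = (1::'a)"
proof -
  have "abs_trace2 d = abs_trace2 (p ^ 3 / r ^ 2) + abs_trace2 1"
    by (simp add: assms(2) abs_trace2_add)
  then show ?thesis
    using card_roots_cubic_eq_1_iff[OF assms(1), of p]
      abs_trace2_eq_0_or_1[of "p ^ 3 / r ^ 2"] abs_trace2_eq_0_or_1[of 1]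
    by auto
qed

lemma N1_eq_card_abs_trace2:
  assumes "\<mu> \<noteq> 0" and "\<mu> \<noteq> 1"
  shows "N1 \<mu> = card {\<gamma>::'a. \<gamma> \<noteq> 0 \<and>
            abs_trace2 ((\<mu>^3 + \<gamma>^4) / (\<gamma>^2 * (\<mu> + 1)^2) + 1 / (\<mu> + 1)) = 1}"
proof -
  have "\<mu> + 1 \<noteq> 0"
    using assms(2) eq_iff_add_eq_0[of \<mu> 1] by simp
  have "card {t. t^3 + \<gamma> * t^2 + \<mu> * t + \<gamma> = 0} = 1 \<longleftrightarrow>
      \<gamma> \<noteq> 0 \<and> abs_trace2 ((\<mu>^3 + \<gamma>^4) / (\<gamma>^2 * (\<mu> + 1)^2) + 1 / (\<mu> + 1)) = 1" for \<gamma>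
  proof (cases "\<gamma> = 0")
    case True
    obtain w where "w ^ 2 = \<mu>"
      using exists_square_eq by blast
    then have "{0, w} \<subseteq> {t. t^3 + \<gamma> * t^2 + \<mu> * t + \<gamma> = 0}"
      using True by (auto simp: power2_eq_square power3_eq_cube)
    moreover have "card {0, w} = 2"
      using \<open>w ^ 2 = \<mu>\<close> assms(1) by auto
    ultimately have "card {t. t^3 + \<gamma> * t^2 + \<mu> * t + \<gamma> = 0} \<noteq> 1"
      using card_mono[of "{t. t^3 + \<gamma> * t^2 + \<mu> * t + \<gamma> = 0}" "{0, w}"] by auto
    then show ?thesis
      using True by simp
  next
    case False
    have "card {t. t^3 + \<gamma> * t^2 + \<mu> * t + \<gamma> = 0}
        = card {s. (s + \<gamma>)^3 + \<gamma> * (s + \<gamma>)^2 + \<mu> * (s + \<gamma>) + \<gamma> = 0}"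
      by (rule card_Collect_shift)
    also have "{s. (s + \<gamma>)^3 + \<gamma> * (s + \<gamma>)^2 + \<mu> * (s + \<gamma>) + \<gamma> = 0}
        = {s. s ^ 3 + (\<gamma>^2 + \<mu>) * s + \<gamma> * (\<mu> + 1) = 0}"
      by (simp add: algebra_simps power2_eq_square power3_eq_cube)
    also have "card \<dots> = 1 \<longleftrightarrow>
        abs_trace2 ((\<mu>^3 + \<gamma>^4) / (\<gamma>^2 * (\<mu> + 1)^2) + 1 / (\<mu> + 1)) = 1"
    proof (rule card_roots_cubic_eq_1_iff_abs_trace2_eq_1)
      show "\<gamma> * (\<mu> + 1) \<noteq> 0"
        using False \<open>\<mu> + 1 \<noteq> 0\<close> by simp
      \<comment> \<open>with \<mu> = u + 1 the denominators \<mu> + 1 become u, which \<open>field_simps\<close> can clear\<close>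
      obtain u where "\<mu> = u + 1" "u \<noteq> 0"
        using \<open>\<mu> + 1 \<noteq> 0\<close> by (metis add_self_left add.commute)
      then show "(\<mu>^3 + \<gamma>^4) / (\<gamma>^2 * (\<mu> + 1)^2) + 1 / (\<mu> + 1) =
          (\<gamma>^2 + \<mu>) ^ 3 / (\<gamma> * (\<mu> + 1)) ^ 2 + 1
            + ((\<gamma>^2 + \<mu>) / (\<mu> + 1) + ((\<gamma>^2 + \<mu>) / (\<mu> + 1)) ^ 2)"
        using False by (simp add: field_simps power2_eq_square power3_eq_cube power4_eq_xxxx)
    qed
    finally show ?thesis
      using False by simp
  qed
  then show ?thesis
    unfolding N1_def by simp
qed

lemma N1_tilde_eq_card_abs_trace2:
  assumes "\<mu> \<noteq> 1"
  shows "N1_tilde \<mu> = card {c::'a. c \<noteq> 0 \<and>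
            abs_trace2 ((1 + \<mu> * c^4) / (c^2 * (\<mu> + 1)^2) + \<mu> / (\<mu> + 1)) = 1}"
proof -
  have "\<mu> + 1 \<noteq> 0"
    using assms eq_iff_add_eq_0[of \<mu> 1] by simp
  have "card {t. t^3 + c * t^2 + t + \<mu> * c = 0} = 1 \<longleftrightarrow>
      abs_trace2 ((1 + \<mu> * c^4) / (c^2 * (\<mu> + 1)^2) + \<mu> / (\<mu> + 1)) = 1" if "c \<noteq> 0" for c
  proof -
    have "card {t. t^3 + c * t^2 + t + \<mu> * c = 0}
        = card {s. (s + c)^3 + c * (s + c)^2 + (s + c) + \<mu> * c = 0}"
      by (rule card_Collect_shift)
    also have "{s. (s + c)^3 + c * (s + c)^2 + (s + c) + \<mu> * c = 0}
        = {s. s ^ 3 + (c^2 + 1) * s + c * (\<mu> + 1) = 0}"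
      by (simp add: algebra_simps power2_eq_square power3_eq_cube)
    also have "card \<dots> = 1 \<longleftrightarrow>
        abs_trace2 ((1 + \<mu> * c^4) / (c^2 * (\<mu> + 1)^2) + \<mu> / (\<mu> + 1)) = 1"
    proof (rule card_roots_cubic_eq_1_iff_abs_trace2_eq_1)
      show "c * (\<mu> + 1) \<noteq> 0"
        using that \<open>\<mu> + 1 \<noteq> 0\<close> by simp
      obtain u where "\<mu> = u + 1" "u \<noteq> 0"
        using \<open>\<mu> + 1 \<noteq> 0\<close> by (metis add_self_left add.commute)
      then show "(1 + \<mu> * c^4) / (c^2 * (\<mu> + 1)^2) + \<mu> / (\<mu> + 1) =
          (c^2 + 1) ^ 3 / (c * (\<mu> + 1)) ^ 2 + 1
            + ((c^2 + 1) / (\<mu> + 1) + ((c^2 + 1) / (\<mu> + 1)) ^ 2)"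
        using that by (simp add: field_simps power2_eq_square power3_eq_cube power4_eq_xxxx)
    qed
    finally show ?thesis .
  qed
  then show ?thesis
    unfolding N1_tilde_def by (metis (lifting))
qed

end

theorem lemma6p4:
  fixes \<mu> :: "'a::{finite,field}"
  assumes "even (CARD('a))"
    and "\<mu> \<noteq> 0" and "\<mu> \<noteq> 1"
  shows "N1 \<mu> = card {\<gamma>::'a. \<gamma> \<noteq> 0 \<and>
            abs_trace2 ((\<mu>^3 + \<gamma>^4) / (\<gamma>^2 * (\<mu> + 1)^2) + 1 / (\<mu> + 1)) = 1} \<and>
         N1_tilde \<mu> = card {c::'a. c \<noteq> 0 \<and>
            abs_trace2 ((1 + \<mu> * c^4) / (c^2 * (\<mu> + 1)^2) + \<mu> / (\<mu> + 1)) = 1}"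
proof -
  have char: "CHAR('a) = 2"
    using assms(1) by (rule CHAR_eq_2_if_even_card)
  then have "x + x = 0" for x :: 'a
    using uminus_CHAR_2[of x] by (simp add: add_eq_0_iff2)
  then obtain m where "CARD('a) = 2 ^ m"
    using card_eq_power_of_two_if_add_self_eq_0 by blast
  with char show ?thesis
    using N1_eq_card_abs_trace2 N1_tilde_eq_card_abs_trace2 assms(2,3) by blast
qed

end
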